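(* Let $\mathcal{R}$ be a set of rules on a finite set $Q$, and let $\mathcal{R}^*$ be the set of critical rules of $\mathcal{A}(\mathcal{R})$. Then $\mathcal{A}(\mathcal{R}^* )=\mathcal{A}(\mathcal{R})$, $|\mathcal{R}^*|\le|\mathcal{R}|$, and $l(\mathcal{R}^* )\le l(\mathcal{R})$.
   Context: A rule on $Q$ is a pair $(A,q)$ with $A\subseteq Q$, $q\in Q$; it accepts $Y\subseteq Q$ if $q\in Y$ implies $Y\cap A\neq\emptyset$. $\mathcal{K}(\mathcal{R})$ is the family of subsets accepted by all rules of $\mathcal{R}$, and $\mathcal{A}(\mathcal{R})$ is the family of $K\in\mathcal{K}(\mathcal{R})$ for which there is a sequence $\emptyset=Y_0\subseteq\dots\subseteq Y_k=K$ of members of $\mathcal{K}(\mathcal{R})$ with $|Y_{i+1}\setminus Y_i|=1$; it is an antimatroid. For an antimatroid $\mathcal{A}$, let $\mathcal{A}^*=\{Q\setminus X: X\in\mathcal{A}\}$ and $\tau(X)=\bigcap\{Y\in\mathcal{A}^*: X\subseteq Y\}$. A rule $(A,q)$ with $q\notin A$ is critical for $\mathcal{A}$ if, with $C=A\cup\{q\}$, $\tau(C)\setminus\{q\}\notin\mathcal{A}^*$ and $\tau(C)\setminus\{q,s\}\in\mathcal{A}^*$ for every $s\in A$. The size of a set of rules is $l(\mathcal{R})=\sum_{(A,q)\in\mathcal{R}}(|A|+1)$. *)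

theory Defs
  imports Main
begin

type_synonym 'a rule = "'a set \<times> 'a"

definition is_rule_on :: "'a set \<Rightarrow> 'a rule \<Rightarrow> bool" where
  "is_rule_on Q r \<longleftrightarrow> fst r \<subseteq> Q \<and> snd r \<in> Q"

definition accepts :: "'a rule \<Rightarrow> 'a set \<Rightarrow> bool" where
  "accepts r Y \<longleftrightarrow> (snd r \<in> Y \<longrightarrow> Y \<inter> fst r \<noteq> {})"

definition KR :: "'a set \<Rightarrow> 'a rule set \<Rightarrow> 'a set set" where
  "KR Q R = {Y. Y \<subseteq> Q \<and> (\<forall>r\<in>R. accepts r Y)}"

definition AR :: "'a set \<Rightarrow> 'a rule set \<Rightarrow> 'a set set" where
  "AR Q R = {K \<in> KR Q R. \<exists>(k::nat) Ys. Ys 0 = {} \<and> Ys k = K \<and>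
      (\<forall>i\<le>k. Ys i \<in> KR Q R) \<and>
      (\<forall>i<k. Ys i \<subseteq> Ys (Suc i) \<and> card (Ys (Suc i) - Ys i) = 1)}"

definition dual :: "'a set \<Rightarrow> 'a set set \<Rightarrow> 'a set set" where
  "dual Q \<A> = {Q - X | X. X \<in> \<A>}"

definition tau :: "'a set \<Rightarrow> 'a set set \<Rightarrow> 'a set \<Rightarrow> 'a set" where
  "tau Q \<A> X = \<Inter>{Y \<in> dual Q \<A>. X \<subseteq> Y}"

definition critical :: "'a set \<Rightarrow> 'a set set \<Rightarrow> 'a rule \<Rightarrow> bool" where
  "critical Q \<A> r \<longleftrightarrow> (let A = fst r; q = snd r; C = insert q A in
     q \<notin> A \<and> tau Q \<A> C - {q} \<notin> dual Q \<A> \<and>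
     (\<forall>s\<in>A. tau Q \<A> C - {q, s} \<in> dual Q \<A>))"

definition critical_rules :: "'a set \<Rightarrow> 'a set set \<Rightarrow> 'a rule set" where
  "critical_rules Q \<A> = {r. is_rule_on Q r \<and> critical Q \<A> r}"

definition rules_size :: "'a rule set \<Rightarrow> nat" where
  "rules_size R = (\<Sum>r\<in>R. card (fst r) + 1)"

end

theory Submission
  imports Defs
begin

text \<open>Every feasible set of the antimatroid \<open>\<A>(\<R>)\<close> is accepted by every critical rule, since
  the closure \<open>\<tau>\<close> of the complements forces the root of a critical rule into every complement
  containing its body. Conversely, a one-point extension that leaves the antimatroid determines,
  by shrinking a complement point by point, a critical rule that rejects it; so the critical
  rules generate the same antimatroid. Finally, each critical rule \<open>(A, q)\<close> is dominated by a
  rule \<open>(B, q)\<close> of \<open>\<R>\<close> with \<open>A \<subseteq> B \<subseteq> \<tau>(A \<union> {q}) - {q}\<close>, and this \<open>B\<close> determines \<open>A\<close>; the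
  resulting injection into \<open>\<R>\<close> gives both inequalities.\<close>

inductive_set accessible :: "'a set \<Rightarrow> 'a rule set \<Rightarrow> 'a set set" for Q R where
  accessible_empty: "{} \<in> accessible Q R"
| accessible_insert:
    "Y \<in> accessible Q R \<Longrightarrow> x \<notin> Y \<Longrightarrow> insert x Y \<in> KR Q R \<Longrightarrow> insert x Y \<in> accessible Q R"

lemma KR_empty: "{} \<in> KR Q R"
  by (auto simp: KR_def accepts_def)

lemma KR_Un: "A \<in> KR Q R \<Longrightarrow> B \<in> KR Q R \<Longrightarrow> A \<union> B \<in> KR Q R"
  unfolding KR_def accepts_def by blast

lemma accessible_KR: "Y \<in> accessible Q R \<Longrightarrow> Y \<in> KR Q R"
  by (induction rule: accessible.induct) (auto simp: KR_empty)

lemma accessible_subset: "Y \<in> accessible Q R \<Longrightarrow> Y \<subseteq> Q"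
  using accessible_KR by (fastforce simp: KR_def)

lemma accessible_Un:
  assumes "Y2 \<in> accessible Q R" "Y1 \<in> accessible Q R"
  shows "Y1 \<union> Y2 \<in> accessible Q R"
  using assms(1)
proof induction
  case accessible_empty
  then show ?case using assms(2) by simp
next
  case (accessible_insert Y x)
  show ?case
  proof (cases "x \<in> Y1 \<union> Y")
    case True
    then show ?thesis using accessible_insert.IH by (simp add: insert_absorb)
  next
    case False
    have "Y1 \<union> insert x Y \<in> KR Q R"
      using KR_Un[OF accessible_KR[OF assms(2)] accessible_insert.hyps(3)] .
    then show ?thesis
      using accessible.accessible_insert[OF accessible_insert.IH False] by simp
  qed
qed

lemma accessible_augment:
  assumes "Y2 \<in> accessible Q R" "Y1 \<in> accessible Q R" "\<not> Y2 \<subseteq> Y1"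
  shows "\<exists>x\<in>Y2 - Y1. insert x Y1 \<in> accessible Q R"
  using assms(1,3)
proof induction
  case accessible_empty
  then show ?case by simp
next
  case (accessible_insert Y x)
  show ?case
  proof (cases "Y \<subseteq> Y1")
    case True
    then have "insert x Y1 = Y1 \<union> insert x Y" by auto
    then have "insert x Y1 \<in> accessible Q R"
      using accessible_Un[OF accessible.accessible_insert[OF accessible_insert.hyps] assms(2)]
      by simp
    then show ?thesis using True accessible_insert.prems by auto
  next
    case False
    then show ?thesis using accessible_insert.IH by auto
  qed
qed

lemma accessible_subset_accessible:
  assumes "accessible Q R \<subseteq> KR Q R'"
  shows "accessible Q R \<subseteq> accessible Q R'"
proof
  fix Y assume "Y \<in> accessible Q R"
  then show "Y \<in> accessible Q R'"
  proof induction
    case (accessible_insert Y x)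
    then show ?case
      using assms accessible.accessible_insert[OF accessible_insert.hyps]
      by (blast intro: accessible.accessible_insert)
  qed (rule accessible.accessible_empty)
qed

lemma AR_eq_accessible: "AR Q R = accessible Q R"
proof
  show "AR Q R \<subseteq> accessible Q R"
  proof
    fix K assume "K \<in> AR Q R"
    then obtain k Ys where Ys: "Ys 0 = {}" "Ys k = K" "\<forall>i\<le>k. Ys i \<in> KR Q R"
      "\<forall>i<k. Ys i \<subseteq> Ys (Suc i) \<and> card (Ys (Suc i) - Ys i) = 1"
      unfolding AR_def by blast
    have "Ys i \<in> accessible Q R" if "i \<le> k" for i
      using that
    proof (induction i)
      case 0
      then show ?case using Ys(1) accessible_empty by simp
    next
      case (Suc i)
      then have "Ys i \<subseteq> Ys (Suc i)" "card (Ys (Suc i) - Ys i) = 1" using Ys(4) by auto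
      then obtain x where "Ys (Suc i) = insert x (Ys i)" "x \<notin> Ys i"
        by (auto simp: card_1_singleton_iff)
      then show ?case using accessible_insert Suc Ys(3) by (metis Suc_leD)
    qed
    then show "K \<in> accessible Q R" using Ys(2) by blast
  qed
next
  show "accessible Q R \<subseteq> AR Q R"
  proof
    fix K assume "K \<in> accessible Q R"
    then show "K \<in> AR Q R"
    proof induction
      case accessible_empty
      show ?case unfolding AR_def using KR_empty
        by (auto intro!: exI[of _ 0] exI[of _ "\<lambda>_. {}"])
    next
      case (accessible_insert Y x)
      obtain k Ys where Ys: "Ys 0 = {}" "Ys k = Y" "\<forall>i\<le>k. Ys i \<in> KR Q R"
        "\<forall>i<k. Ys i \<subseteq> Ys (Suc i) \<and> card (Ys (Suc i) - Ys i) = 1"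
        using accessible_insert.IH unfolding AR_def by blast
      define Ys' where "Ys' = Ys(Suc k := insert x Y)"
      have "insert x Y - Y = {x}" using accessible_insert.hyps(2) by auto
      then have "\<forall>i<Suc k. Ys' i \<subseteq> Ys' (Suc i) \<and> card (Ys' (Suc i) - Ys' i) = 1"
        using Ys by (auto simp: Ys'_def less_Suc_eq)
      moreover have "\<forall>i\<le>Suc k. Ys' i \<in> KR Q R"
        using Ys accessible_insert.hyps(3) by (auto simp: Ys'_def le_Suc_eq)
      ultimately show ?case
        using Ys accessible_insert.hyps(3) unfolding AR_def
        by (intro CollectI conjI exI[of _ "Suc k"] exI[of _ Ys']) (auto simp: Ys'_def)
    qed
  qed
qed

lemma rules_size_le_inj:
  assumes "finite R" "inj_on f S" "f ` S \<subseteq> R" "\<And>r. r \<in> S \<Longrightarrow> card (fst r) \<le> card (fst (f r))"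
  shows "rules_size S \<le> rules_size R"
proof -
  have "rules_size S \<le> (\<Sum>r\<in>S. card (fst (f r)) + 1)"
    unfolding rules_size_def by (rule sum_mono) (simp add: assms(4))
  also have "\<dots> = (\<Sum>b\<in>f ` S. card (fst b) + 1)"
    by (simp add: sum.reindex[OF assms(2)])
  also have "\<dots> \<le> rules_size R"
    unfolding rules_size_def by (rule sum_mono2[OF assms(1,3)]) simp
  finally show ?thesis .
qed

lemma finite_Inter_mem:
  "finite F \<Longrightarrow> F \<noteq> {} \<Longrightarrow> F \<subseteq> C \<Longrightarrow> (\<And>a b. a \<in> C \<Longrightarrow> b \<in> C \<Longrightarrow> a \<inter> b \<in> C) \<Longrightarrow> \<Inter>F \<in> C"
  by (induction F rule: finite_ne_induct) auto

locale finite_rule_system =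
  fixes Q :: "'a set" and R :: "'a rule set"
  assumes finite_Q: "finite Q"
begin

abbreviation "feasible \<equiv> accessible Q R"
abbreviation "closed \<equiv> dual Q feasible"
abbreviation "cl \<equiv> tau Q feasible"
abbreviation "crit \<equiv> critical_rules Q feasible"

lemma closed_iff:
  assumes "S \<subseteq> Q"
  shows "S \<in> closed \<longleftrightarrow> Q - S \<in> feasible"
proof
  assume "S \<in> closed"
  then obtain X where "S = Q - X" "X \<in> feasible" unfolding dual_def by blast
  then show "Q - S \<in> feasible" using accessible_subset by (metis Diff_Diff_Int Int_absorb1)
next
  assume "Q - S \<in> feasible"
  then show "S \<in> closed" unfolding dual_def using assms by (auto intro!: exI[of _ "Q - S"])
qed

lemma closed_subset: "D \<in> closed \<Longrightarrow> D \<subseteq> Q"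
  unfolding dual_def by blast

lemma complement_closed: "Y \<in> feasible \<Longrightarrow> Q - Y \<in> closed"
  unfolding dual_def by blast

lemma closed_Int:
  assumes "D1 \<in> closed" "D2 \<in> closed"
  shows "D1 \<inter> D2 \<in> closed"
proof -
  obtain Y1 Y2 where "D1 = Q - Y1" "D2 = Q - Y2" "Y1 \<in> feasible" "Y2 \<in> feasible"
    using assms unfolding dual_def by blast
  then show ?thesis using complement_closed[OF accessible_Un] by (simp add: Diff_Un)
qed

lemma closed_top: "Q \<in> closed"
  using complement_closed[OF accessible_empty] by simp

lemma closed_augment:
  assumes "E \<in> closed" "D \<in> closed" "E \<subset> D"
  shows "\<exists>x\<in>D - E. D - {x} \<in> closed"
proof -
  obtain Y1 Y2 where Y: "E = Q - Y1" "D = Q - Y2" "Y1 \<in> feasible" "Y2 \<in> feasible"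
    using assms(1,2) unfolding dual_def by blast
  then have "\<not> Y1 \<subseteq> Y2" using assms(3) accessible_subset by blast
  then obtain x where x: "x \<in> Y1 - Y2" "insert x Y2 \<in> feasible"
    using accessible_augment[OF Y(3,4)] by blast
  moreover have "D - {x} = Q - insert x Y2" using Y(2) by blast
  ultimately have "D - {x} \<in> closed" using complement_closed by simp
  moreover have "x \<in> D - E" using x Y accessible_subset by blast
  ultimately show ?thesis by blast
qed

lemma cl_closed: "X \<subseteq> Q \<Longrightarrow> cl X \<in> closed"
proof -
  assume "X \<subseteq> Q"
  let ?F = "{Y \<in> closed. X \<subseteq> Y}"
  have "finite ?F" using finite_Q closed_subset by (blast intro: finite_subset[of _ "Pow Q"])
  moreover have "?F \<noteq> {}" using closed_top \<open>X \<subseteq> Q\<close> by blast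
  ultimately show "cl X \<in> closed"
    unfolding tau_def by (rule finite_Inter_mem) (auto intro: closed_Int)
qed

lemma cl_incr: "X \<subseteq> cl X"
  unfolding tau_def by auto

lemma cl_least: "Z \<in> closed \<Longrightarrow> X \<subseteq> Z \<Longrightarrow> cl X \<subseteq> Z"
  unfolding tau_def by auto

lemma crit_iff: "(A, q) \<in> crit \<longleftrightarrow> A \<subseteq> Q \<and> q \<in> Q \<and> q \<notin> A \<and>
    cl (insert q A) - {q} \<notin> closed \<and> (\<forall>s\<in>A. cl (insert q A) - {q, s} \<in> closed)"
  by (auto simp: critical_rules_def is_rule_on_def critical_def Let_def)

text \<open>If \<open>Z\<close> missed \<open>q\<close>, augmenting \<open>Z \<inter> cl(A \<union> {q})\<close> inside \<open>cl(A \<union> {q})\<close> would remove a point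
  other than \<open>q\<close> and outside \<open>A\<close> from the closure while keeping it closed.\<close>
lemma root_mem_closed:
  assumes "insert q A \<subseteq> Q" "cl (insert q A) - {q} \<notin> closed" "Z \<in> closed" "A \<subseteq> Z"
  shows "q \<in> Z"
proof (rule ccontr)
  assume "q \<notin> Z"
  let ?T = "cl (insert q A)"
  have T: "?T \<in> closed" "insert q A \<subseteq> ?T" using cl_closed[OF assms(1)] cl_incr by auto
  then have "Z \<inter> ?T \<subset> ?T" using \<open>q \<notin> Z\<close> by auto
  then obtain x where x: "x \<in> ?T - Z" "?T - {x} \<in> closed"
    using closed_augment[OF closed_Int[OF assms(3) T(1)] T(1)] by blast
  then have "insert q A \<subseteq> ?T - {x}" using T assms(2,4) by auto
  then have "?T \<subseteq> ?T - {x}" using cl_least[OF x(2)] by simp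
  then show False using x by auto
qed

lemma feasible_KR_crit: "feasible \<subseteq> KR Q crit"
proof
  fix Y assume Y: "Y \<in> feasible"
  have "accepts (A, q) Y" if "(A, q) \<in> crit" for A q
  proof -
    have "insert q A \<subseteq> Q" "cl (insert q A) - {q} \<notin> closed" using that crit_iff by auto
    then show ?thesis
      using root_mem_closed[OF _ _ complement_closed[OF Y]] unfolding accepts_def by auto
  qed
  then show "Y \<in> KR Q crit" using accessible_subset[OF Y] unfolding KR_def by auto
qed

text \<open>With \<open>A\<close> the points whose removal from \<open>Z - {x}\<close> stays closed, either \<open>cl(A \<union> {x}) = Z\<close> and
  \<open>(A, x)\<close> is critical, or augmentation removes from \<open>Z\<close> some \<open>y \<notin> A\<close>, and the smaller set
  \<open>Z - {y}\<close> satisfies the same hypotheses.\<close>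
lemma critical_rule_within:
  assumes "Z \<in> closed" "x \<in> Z" "Z - {x} \<notin> closed"
  shows "\<exists>A. (A, x) \<in> crit \<and> A \<subseteq> Z - {x}"
  using assms
proof (induction "card Z" arbitrary: Z rule: less_induct)
  case less
  define A where "A = {s \<in> Z - {x}. Z - {x, s} \<in> closed}"
  have ZQ: "Z \<subseteq> Q" using closed_subset less.prems(1) .
  have xA: "insert x A \<subseteq> Z" using less.prems(2) by (auto simp: A_def)
  let ?E = "cl (insert x A)"
  have E: "?E \<in> closed" "insert x A \<subseteq> ?E" "?E \<subseteq> Z"
    using cl_closed[OF subset_trans[OF xA ZQ]] cl_incr cl_least[OF less.prems(1) xA] by auto
  show ?case
  proof (cases "?E = Z")
    case True
    then have "(A, x) \<in> crit"
      unfolding crit_iff using ZQ xA less.prems(3) by (auto simp: A_def)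
    then show ?thesis by (auto simp: A_def)
  next
    case False
    then obtain y where y: "y \<in> Z - ?E" "Z - {y} \<in> closed"
      using closed_augment[OF E(1) less.prems(1)] E(3) by blast
    then have "y \<noteq> x" "y \<notin> A" using E(2) by auto
    then have "Z - {x, y} \<notin> closed" using y(1) by (auto simp: A_def)
    moreover have "Z - {y} - {x} = Z - {x, y}" by blast
    moreover have "card (Z - {y}) < card Z"
      using y(1) finite_subset[OF ZQ finite_Q] by (blast intro: card_Diff1_less)
    ultimately obtain A' where "(A', x) \<in> crit" "A' \<subseteq> Z - {y} - {x}"
      using less.hyps[of "Z - {y}"] y(2) \<open>y \<noteq> x\<close> less.prems(2) by auto
    then show ?thesis by blast
  qed
qed

lemma accessible_crit_eq: "accessible Q crit = feasible"
proof
  show "feasible \<subseteq> accessible Q crit"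
    using accessible_subset_accessible[OF feasible_KR_crit] .
next
  show "accessible Q crit \<subseteq> feasible"
  proof
    fix Y assume "Y \<in> accessible Q crit"
    then show "Y \<in> feasible"
    proof induction
      case (accessible_insert Y x)
      have YQ: "insert x Y \<subseteq> Q" using accessible_insert.hyps(3) by (simp add: KR_def)
      show ?case
      proof (rule ccontr)
        assume "insert x Y \<notin> feasible"
        moreover have "Q - (Q - insert x Y) = insert x Y" using YQ by blast
        moreover have "Q - Y - {x} = Q - insert x Y" by blast
        ultimately have "Q - Y - {x} \<notin> closed" using closed_iff[of "Q - insert x Y"] by simp
        moreover have "x \<in> Q - Y" using YQ accessible_insert.hyps(2) by blast
        ultimately obtain A where "(A, x) \<in> crit" "A \<subseteq> Q - Y - {x}"
          using critical_rule_within[OF complement_closed[OF accessible_insert.IH]] by blast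
        then show False
          using accessible_insert.hyps(3) unfolding KR_def accepts_def by fastforce
      qed
    qed (rule accessible.accessible_empty)
  qed
qed

text \<open>The complement \<open>Y\<close> of \<open>cl(A \<union> {q}) - {q}\<close> is a one-point extension of a feasible set that is
  not feasible, so some rule of \<open>R\<close> rejects it; its root must be \<open>q\<close>, and it must contain \<open>A\<close>
  because each \<open>Y \<union> {s}\<close>, \<open>s \<in> A\<close>, is feasible.\<close>
lemma critical_rule_dominated:
  assumes rules: "\<forall>r\<in>R. is_rule_on Q r" and crit: "(A, q) \<in> crit"
  shows "\<exists>B. (B, q) \<in> R \<and> A \<subseteq> B \<and> B \<subseteq> cl (insert q A) - {q}"
proof -
  let ?T = "cl (insert q A)"
  let ?X = "?T - {q}"
  have c: "insert q A \<subseteq> Q" "?X \<notin> closed" "\<forall>s\<in>A. ?T - {q, s} \<in> closed"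
    using crit crit_iff by auto
  have T: "?T \<in> closed" "insert q A \<subseteq> ?T" "?T \<subseteq> Q"
    using cl_closed[OF c(1)] cl_incr closed_subset by auto
  define Y where "Y = Q - ?X"
  have Y0: "Q - ?T \<in> feasible" using closed_iff T by blast
  have Y_eq: "Y = insert q (Q - ?T)" using T by (auto simp: Y_def)
  have "Y \<notin> feasible" using closed_iff[of ?X] T c(2) by (auto simp: Y_def)
  then have "Y \<notin> KR Q R" using accessible_insert[OF Y0] Y_eq T by auto
  then obtain B q' where B: "(B, q') \<in> R" "q' \<in> Y" "Y \<inter> B = {}"
    unfolding KR_def accepts_def Y_def by auto
  have "accepts (B, q') (Q - ?T)" using accessible_KR[OF Y0] B(1) unfolding KR_def by blast
  then have q': "q' = q" using B Y_eq unfolding accepts_def by auto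
  have "s \<in> B" if "s \<in> A" for s
  proof -
    have "Q - (?T - {q, s}) = insert s Y" using T that by (auto simp: Y_def)
    then have "insert s Y \<in> feasible" using closed_iff[of "?T - {q, s}"] c(3) T that by auto
    then have "accepts (B, q) (insert s Y)" using accessible_KR B(1) q' unfolding KR_def by blast
    then show ?thesis using B q' unfolding accepts_def by auto
  qed
  moreover have "B \<subseteq> ?X" using rules B(1,3) unfolding Y_def is_rule_on_def by fastforce
  ultimately show ?thesis using B(1) q' by blast
qed

lemma critical_rule_unique:
  assumes "(A1, q) \<in> crit" "(A2, q) \<in> crit" "A1 \<union> A2 \<subseteq> B"
    "B \<subseteq> cl (insert q A1) - {q}" "B \<subseteq> cl (insert q A2) - {q}"
  shows "A1 = A2"
proof -
  have cl_le: "cl (insert q A) \<subseteq> cl (insert q A')"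
    if "(A, q) \<in> crit" "(A', q) \<in> crit" "A \<subseteq> B" "B \<subseteq> cl (insert q A') - {q}" for A A'
  proof (rule cl_least)
    show "cl (insert q A') \<in> closed" using cl_closed that(2) crit_iff by simp
    show "insert q A \<subseteq> cl (insert q A')" using that(3,4) cl_incr[of "insert q A'"] by blast
  qed
  have cl_eq: "cl (insert q A1) = cl (insert q A2)"
    using cl_le[OF assms(1,2)] cl_le[OF assms(2,1)] assms(3-5) by blast
  have sub: "A \<subseteq> A'" if "(A, q) \<in> crit" "(A', q) \<in> crit" "A' \<subseteq> cl (insert q A) - {q}"
    and "cl (insert q A) = cl (insert q A')" for A A'
  proof
    fix s assume "s \<in> A"
    show "s \<in> A'"
    proof (rule ccontr)
      assume "s \<notin> A'"
      have "insert q A' \<subseteq> Q" "cl (insert q A') - {q} \<notin> closed" using that(2) crit_iff by auto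
      moreover have "cl (insert q A) - {q, s} \<in> closed" using that(1) \<open>s \<in> A\<close> crit_iff by auto
      moreover have "A' \<subseteq> cl (insert q A) - {q, s}" using that(3) \<open>s \<notin> A'\<close> by blast
      ultimately have "q \<in> cl (insert q A) - {q, s}" using that(4) by (metis root_mem_closed)
      then show False by blast
    qed
  qed
  show ?thesis
    using sub[OF assms(1,2) _ cl_eq] sub[OF assms(2,1) _ cl_eq[symmetric]] assms(3-5) by blast
qed

lemma critical_rules_inj_into:
  assumes "\<forall>r\<in>R. is_rule_on Q r"
  shows "\<exists>f. inj_on f crit \<and> f ` crit \<subseteq> R \<and> (\<forall>r\<in>crit. fst r \<subseteq> fst (f r))"
proof -
  have "\<forall>r\<in>crit. \<exists>b. b \<in> R \<and> snd b = snd r \<and> fst r \<subseteq> fst b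
      \<and> fst b \<subseteq> cl (insert (snd r) (fst r)) - {snd r}"
  proof
    fix r assume "r \<in> crit"
    then obtain B where "(B, snd r) \<in> R" "fst r \<subseteq> B" "B \<subseteq> cl (insert (snd r) (fst r)) - {snd r}"
      using critical_rule_dominated[OF assms, of "fst r" "snd r"] by auto
    then show "\<exists>b. b \<in> R \<and> snd b = snd r \<and> fst r \<subseteq> fst b
      \<and> fst b \<subseteq> cl (insert (snd r) (fst r)) - {snd r}" by fastforce
  qed
  then have "\<exists>f. \<forall>r\<in>crit. f r \<in> R \<and> snd (f r) = snd r \<and> fst r \<subseteq> fst (f r)
      \<and> fst (f r) \<subseteq> cl (insert (snd r) (fst r)) - {snd r}"
    by (rule bchoice)
  then obtain f where f: "\<forall>r\<in>crit. f r \<in> R \<and> snd (f r) = snd r \<and> fst r \<subseteq> fst (f r)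
      \<and> fst (f r) \<subseteq> cl (insert (snd r) (fst r)) - {snd r}"
    by blast
  have "inj_on f crit"
  proof (rule inj_onI)
    fix r1 r2 assume r: "r1 \<in> crit" "r2 \<in> crit" "f r1 = f r2"
    then have q: "snd r1 = snd r2" using f by metis
    have B1: "fst r1 \<subseteq> fst (f r1)" "fst (f r1) \<subseteq> cl (insert (snd r1) (fst r1)) - {snd r1}"
      using f r(1) by auto
    have B2: "fst r2 \<subseteq> fst (f r1)" "fst (f r1) \<subseteq> cl (insert (snd r1) (fst r2)) - {snd r1}"
      using f r(2) by (auto simp: r(3) q)
    have "(fst r1, snd r1) \<in> crit" using r(1) by simp
    moreover have "(fst r2, snd r1) \<in> crit" using r(2) by (simp add: q)
    ultimately have "fst r1 = fst r2"
      using critical_rule_unique B1(2) B2(2) B1(1) B2(1) by (metis Un_subset_iff)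
    then show "r1 = r2" using q by (rule prod_eqI)
  qed
  then show ?thesis using f by blast
qed

end

theorem corollary3p7:
  fixes Q :: "'a set" and R :: "'a rule set"
  assumes "finite Q"
    and "\<forall>r\<in>R. is_rule_on Q r"
  shows "AR Q (critical_rules Q (AR Q R)) = AR Q R
    \<and> card (critical_rules Q (AR Q R)) \<le> card R
    \<and> rules_size (critical_rules Q (AR Q R)) \<le> rules_size R"
proof -
  interpret finite_rule_system Q R using assms(1) by unfold_locales
  have "R \<subseteq> Pow Q \<times> Q" using assms(2) unfolding is_rule_on_def by fastforce
  then have finite_R: "finite R" using finite_subset assms(1) by blast
  obtain f where f: "inj_on f crit" "f ` crit \<subseteq> R" "\<forall>r\<in>crit. fst r \<subseteq> fst (f r)"
    using critical_rules_inj_into[OF assms(2)] by blast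
  have "card (fst r) \<le> card (fst (f r))" if "r \<in> crit" for r
  proof (rule card_mono)
    have "f r \<in> R" using f(2) that by blast
    then show "finite (fst (f r))" using assms by (auto simp: is_rule_on_def intro: finite_subset)
    show "fst r \<subseteq> fst (f r)" using f(3) that by blast
  qed
  then have "rules_size crit \<le> rules_size R" by (rule rules_size_le_inj[OF finite_R f(1,2)])
  moreover have "card crit \<le> card R" by (rule card_inj_on_le[OF f(1,2) finite_R])
  ultimately show ?thesis unfolding AR_eq_accessible using accessible_crit_eq by simp
qed

end
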